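(* Let $n\ge2$ and for $1\le i,j\le n$ let $E_{ij}=e_ie_j^\top+e_je_i^\top\in\mathcal{S}^n$. Then $$\mathcal{R}_{\mathcal{COP}}=\operatorname{conv}\{P\in\mathcal{S}^n: P \text{ perfect copositive},\ \min_{\mathcal{COP}}P=1\}+\operatorname{cone}\{E_{ij}: i\ne j\}.$$
   Context: $\mathcal{S}^n$: real symmetric $n\times n$ matrices; $e_i$: standard unit vectors; $B[v]=v^\top Bv$. $\mathcal{R}_{\mathcal{COP}}=\{B\in\mathcal{S}^n: B[v]\ge1 \text{ for all } v\in\mathbb{Z}^n_{\ge0}\setminus\{0\}\}$ is the copositive Ryshkov polyhedron. $\mathcal{COP}^n=\{B\in\mathcal{S}^n: B[x]\ge0\ \forall x\in\mathbb{R}^n_{\ge0}\}$; strictly copositive means lying in its interior; $\min_{\mathcal{COP}}B=\inf\{B[v]: v\in\mathbb{Z}^n_{\ge0}\setminus\{0\}\}$, $\operatorname{Min}_{\mathcal{COP}}B=\{v\in\mathbb{Z}^n_{\ge0}: B[v]=\min_{\mathcal{COP}}B\}$; a strictly copositive $P$ is perfect copositive if it is the unique $Q\in\mathcal{S}^n$ with $Q[v]=\min_{\mathcal{COP}}P$ for all $v\in\operatorname{Min}_{\mathcal{COP}}P$. $\operatorname{conv}$ and $\operatorname{cone}$ denote convex hull and convex conic hull (finite nonnegative combinations). *)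

theory Defs
  imports "HOL-Analysis.Analysis"
begin

text \<open>Symmetric n x n real matrices, indexed by a finite type 'n (n = CARD('n)).\<close>
definition Sym :: "(real^'n^'n) set" where
  "Sym = {B. transpose B = B}"

definition qf :: "real^'n^'n \<Rightarrow> real^'n \<Rightarrow> real" where
  "qf B v = v \<bullet> (B *v v)"

definition ZposNZ :: "(real^'n) set" where
  "ZposNZ = {v. (\<forall>i. v $ i \<in> \<int> \<and> v $ i \<ge> 0) \<and> v \<noteq> 0}"

definition RyshkovCOP :: "(real^'n^'n) set" where
  "RyshkovCOP = {B \<in> Sym. \<forall>v \<in> ZposNZ. qf B v \<ge> 1}"

definition COP :: "(real^'n^'n) set" where
  "COP = {B \<in> Sym. \<forall>x. (\<forall>i. x $ i \<ge> 0) \<longrightarrow> qf B x \<ge> 0}"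

text \<open>Strictly copositive: interior of COP taken in the space Sym.\<close>
definition strictly_copositive :: "real^'n^'n \<Rightarrow> bool" where
  "strictly_copositive B \<longleftrightarrow> B \<in> Sym \<and> (\<exists>e>0. ball B e \<inter> Sym \<subseteq> COP)"

definition minCOP :: "real^'n^'n \<Rightarrow> real" where
  "minCOP B = Inf {qf B v | v. v \<in> ZposNZ}"

definition MinCOP :: "real^'n^'n \<Rightarrow> (real^'n) set" where
  "MinCOP B = {v. (\<forall>i. v $ i \<in> \<int> \<and> v $ i \<ge> 0) \<and> qf B v = minCOP B}"

definition perfect_copositive :: "real^'n^'n \<Rightarrow> bool" where
  "perfect_copositive P \<longleftrightarrow> strictly_copositive P \<and>
     (\<forall>Q \<in> Sym. (\<forall>v \<in> MinCOP P. qf Q v = minCOP P) \<longleftrightarrow> Q = P)"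

definition Emat :: "'n \<Rightarrow> 'n \<Rightarrow> real^'n^'n" where
  "Emat i j = (\<chi> a b. (if a = i \<and> b = j then 1 else 0) + (if a = j \<and> b = i then 1 else 0))"

text \<open>Convex conic hull: all finite nonnegative combinations (the empty one gives 0).\<close>
definition ccone :: "'a::real_vector set \<Rightarrow> 'a set" where
  "ccone S = {y. \<exists>F c. finite F \<and> F \<subseteq> S \<and> (\<forall>x\<in>F. c x \<ge> 0) \<and> y = (\<Sum>x\<in>F. c x *\<^sub>R x)}"

end

theory Submission
  imports Defs
begin

text \<open>Perfect forms with minimum 1 lie in the convex set R, and adding a nonnegative combination of
  the E_ij does not decrease B[v] on nonnegative vectors; hence the right-hand side is contained
  in R. Conversely, for A in R let L(A) be the space of symmetric Q with Q[v] = 0 whenever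
  A[v] = 1; A is perfect with minimum 1 exactly when L(A) = 0. A Dirichlet approximation argument
  shows that forms in R are positive on the orthant minus the origin, hence bounded below by
  c |x|^2 there; so A can be moved a little along any Q in L(A), and along a Q that is negative
  somewhere on the lattice until a new vector attains 1, which strictly lowers dim L. If
  L(A) is nonzero it contains a Q that lies in cone{E_ij} or takes both signs on the lattice:
  then A = (A - sQ) + sQ, or A is a convex combination of A + s Q and A - t Q, and induction on
  dim L(A) concludes.\<close>


section \<open>Quadratic forms of symmetric matrices\<close>

lemma qf_as_sum: "qf A v = (\<Sum>i\<in>UNIV. \<Sum>j\<in>UNIV. v$i * A$i$j * v$j)"
  unfolding qf_def inner_vec_def matrix_vector_mult_def
  by (simp add: sum_distrib_left mult_ac)

lemma qf_add: "qf (A + B) v = qf A v + qf B v"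
  unfolding qf_def by (simp add: matrix_vector_mult_add_rdistrib inner_add_right)

lemma qf_scaleR: "qf (c *\<^sub>R A) v = c * qf A v"
  unfolding qf_def by (simp add: scaleR_matrix_vector_assoc[symmetric])

lemma qf_uminus: "qf (- A) v = - qf A v"
  using qf_scaleR[of "-1" A v] by simp

lemma qf_diff: "qf (A - B) v = qf A v - qf B v"
  using qf_add[of A "- B" v] by (simp add: qf_uminus)

lemma qf_zero [simp]: "qf 0 v = 0" "qf A 0 = 0"
  unfolding qf_def by simp_all

lemma qf_scaleR_vec: "qf A (c *\<^sub>R x) = c\<^sup>2 * qf A x"
  unfolding qf_def by (simp add: matrix_vector_mult_scaleR power2_eq_square)

lemma matrix_vector_mult_axis: "(A *v axis j 1) $ i = A$i$j"
  by (simp add: matrix_vector_mult_def axis_def if_distrib[of "\<lambda>x. _ * x"] cong: if_cong)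

lemma inner_axis_left: "axis i 1 \<bullet> (w::real^'n) = w $ i"
  by (simp add: cart_eq_inner_axis inner_commute)

lemma qf_axis: "qf A (axis i 1) = A$i$i"
  unfolding qf_def by (simp add: inner_axis_left matrix_vector_mult_axis)

lemma Sym_iff: "B \<in> Sym \<longleftrightarrow> (\<forall>i j. B$i$j = B$j$i)"
  unfolding Sym_def transpose_def by (auto simp: vec_eq_iff)

lemma subspace_Sym: "subspace Sym"
  unfolding subspace_def by (auto simp: Sym_iff)

lemma qf_axis_add_axis:
  assumes "A \<in> Sym" "i \<noteq> j"
  shows "qf A (axis i 1 + axis j 1) = A$i$i + 2 * A$i$j + A$j$j"
  using assms unfolding qf_def
  by (simp add: inner_axis_left matrix_vector_mult_axis matrix_vector_right_distrib
      inner_add_left Sym_iff)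

lemma qf_add_vec:
  assumes "A \<in> Sym"
  shows "qf A (x + y) = qf A x + qf A y + 2 * (y \<bullet> (A *v x))"
proof -
  have "x \<bullet> (A *v y) = (\<Sum>i\<in>UNIV. \<Sum>j\<in>UNIV. x$i * A$i$j * y$j)"
    unfolding inner_vec_def matrix_vector_mult_def by (simp add: sum_distrib_left mult.assoc)
  also have "\<dots> = (\<Sum>j\<in>UNIV. \<Sum>i\<in>UNIV. y$j * A$j$i * x$i)"
    using assms by (subst sum.swap) (simp add: Sym_iff mult_ac)
  also have "\<dots> = y \<bullet> (A *v x)"
    unfolding inner_vec_def matrix_vector_mult_def by (simp add: sum_distrib_left mult.assoc)
  finally show ?thesis
    unfolding qf_def by (simp add: matrix_vector_right_distrib inner_add_left inner_add_right)
qed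

lemma abs_qf_le_onorm: "\<bar>qf A x\<bar> \<le> onorm ((*v) A) * (norm x)\<^sup>2"
proof -
  have "\<bar>qf A x\<bar> \<le> norm x * norm (A *v x)"
    unfolding qf_def by (rule Cauchy_Schwarz_ineq2)
  also have "\<dots> \<le> norm x * (onorm ((*v) A) * norm x)"
    by (intro mult_left_mono onorm[OF matrix_vector_mul_bounded_linear]) simp
  finally show ?thesis by (simp add: power2_eq_square mult_ac)
qed

lemma onorm_le_card_norm: "onorm ((*v) (A::real^'n::finite^'n)) \<le> (real CARD('n))\<^sup>2 * norm A"
proof -
  have "\<bar>A$i$j\<bar> \<le> norm A" for i j
  proof -
    have "\<bar>A$i$j\<bar> \<le> norm (A$i)" by (rule component_le_norm_cart)
    also have "\<dots> \<le> norm A" unfolding norm_vec_def[of A] by (rule member_le_L2_set) simp_all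
    finally show ?thesis .
  qed
  then show ?thesis
    using onorm_le_matrix_component[of A "norm A"] by (simp add: power2_eq_square)
qed

lemma continuous_on_qf: "continuous_on S (qf A)"
  unfolding qf_def[abs_def] by (intro continuous_intros)

lemma axis_in_ZposNZ: "axis i 1 \<in> ZposNZ" "axis i 1 + axis j 1 \<in> ZposNZ"
  unfolding ZposNZ_def by (auto simp: axis_def vec_eq_iff)

lemma Sym_eq_0_if_qf_vanishes:
  assumes "M \<in> Sym" "\<forall>v\<in>ZposNZ. qf M v = 0"
  shows "M = 0"
proof -
  have diag: "M$i$i = 0" for i
    using assms(2) axis_in_ZposNZ(1)[of i] qf_axis[of M i] by auto
  have "M$i$j = 0" for i j
  proof (cases "i = j")
    case False
    then show ?thesis
      using assms(2) axis_in_ZposNZ(2)[of i j] qf_axis_add_axis[OF assms(1) False] diag by simp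
  qed (simp add: diag)
  then show ?thesis by (simp add: vec_eq_iff)
qed


section \<open>The cone generated by the matrices E_ij\<close>

abbreviation Emats :: "(real^'n::finite^'n) set" where
  "Emats \<equiv> {Emat i j | i j. i \<noteq> j}"

lemma convex_cone_sum:
  assumes "convex_cone S" "\<And>x. x \<in> F \<Longrightarrow> f x \<in> S"
  shows "sum f F \<in> S"
  using assms(2)
proof (induction F rule: infinite_finite_induct)
  case (insert x F)
  then show ?case using assms(1) by (simp add: convex_cone_add)
qed (use assms(1) convex_cone_contains_0 in auto)

lemma ccone_add:
  assumes "x \<in> ccone S" "y \<in> ccone S"
  shows "x + y \<in> ccone S"
proof -
  obtain F c where F: "finite F" "F \<subseteq> S" "\<forall>z\<in>F. c z \<ge> 0" "x = (\<Sum>z\<in>F. c z *\<^sub>R z)"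
    using assms(1) unfolding ccone_def by blast
  obtain G d where G: "finite G" "G \<subseteq> S" "\<forall>z\<in>G. d z \<ge> 0" "y = (\<Sum>z\<in>G. d z *\<^sub>R z)"
    using assms(2) unfolding ccone_def by blast
  define e where "e z = (if z \<in> F then c z else 0) + (if z \<in> G then d z else 0)" for z
  have "(\<Sum>z\<in>F \<union> G. e z *\<^sub>R z) =
      (\<Sum>z\<in>F \<union> G. if z \<in> F then c z *\<^sub>R z else 0) + (\<Sum>z\<in>F \<union> G. if z \<in> G then d z *\<^sub>R z else 0)"
    unfolding e_def by (simp add: scaleR_add_left sum.distrib if_distrib[of "\<lambda>a. a *\<^sub>R _"] cong: if_cong)
  also have "\<dots> = x + y"
    using F G by (simp add: sum.inter_restrict[symmetric] Int_absorb1)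
  finally show ?thesis
    unfolding ccone_def using F G by (intro CollectI exI[of _ "F \<union> G"] exI[of _ e]) (auto simp: e_def)
qed

lemma ccone_scaleR:
  assumes "x \<in> ccone S" "a \<ge> 0"
  shows "a *\<^sub>R x \<in> ccone S"
proof -
  obtain F c where F: "finite F" "F \<subseteq> S" "\<forall>z\<in>F. c z \<ge> 0" "x = (\<Sum>z\<in>F. c z *\<^sub>R z)"
    using assms(1) unfolding ccone_def by blast
  then have "a *\<^sub>R x = (\<Sum>z\<in>F. (a * c z) *\<^sub>R z)" by (simp add: scaleR_sum_right)
  then show ?thesis
    unfolding ccone_def using F assms(2) by (intro CollectI exI[of _ F] exI[of _ "\<lambda>z. a * c z"]) auto
qed

lemma ccone_eq_convex_cone_hull: "ccone S = convex_cone hull S"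
proof
  show "ccone S \<subseteq> convex_cone hull S"
  proof
    fix y assume "y \<in> ccone S"
    then obtain F c where F: "F \<subseteq> S" "\<forall>z\<in>F. c z \<ge> 0" "y = (\<Sum>z\<in>F. c z *\<^sub>R z)"
      unfolding ccone_def by blast
    have "c z *\<^sub>R z \<in> convex_cone hull S" if "z \<in> F" for z
      using that F by (intro convex_cone_hull_mul hull_inc) auto
    then show "y \<in> convex_cone hull S"
      unfolding F(3) by (rule convex_cone_sum[OF convex_cone_convex_cone_hull])
  qed
  have "convex_cone (ccone S)"
    unfolding convex_cone_iff
  proof (intro conjI ballI allI impI)
    show "0 \<in> ccone S" unfolding ccone_def by (auto intro!: exI[of _ "{}"])
  qed (auto intro: ccone_add ccone_scaleR)
  moreover have "S \<subseteq> ccone S"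
    unfolding ccone_def by (auto intro!: exI[of _ "{_}"] exI[of _ "\<lambda>_. 1"])
  ultimately show "convex_cone hull S \<subseteq> ccone S" by (rule hull_minimal[rotated])
qed

lemma Emat_nth: "Emat i j $ a $ b = (if a = i \<and> b = j then 1 else 0) + (if a = j \<and> b = i then 1 else 0)"
  by (simp add: Emat_def)

lemma Sym_Emat: "Emat i j \<in> Sym"
  unfolding Sym_iff Emat_nth by (simp add: conj_commute)

lemma ccone_Emat_iff:
  "C \<in> ccone Emats \<longleftrightarrow> C \<in> Sym \<and> (\<forall>i. C$i$i = 0) \<and> (\<forall>i j. 0 \<le> C$i$j)"
  (is "C \<in> ccone ?E \<longleftrightarrow> ?hollow C")
proof
  let ?N = "Collect ?hollow"
  have "convex_cone ?N"
    unfolding convex_cone_iff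
    by (auto intro: subspace_add[OF subspace_Sym] subspace_mul[OF subspace_Sym] subspace_0[OF subspace_Sym])
  moreover have "?E \<subseteq> ?N"
    by (auto simp: Sym_Emat Emat_nth)
  ultimately have "convex_cone hull ?E \<subseteq> ?N"
    by (rule hull_minimal[rotated])
  then show "C \<in> ccone ?E \<Longrightarrow> ?hollow C"
    by (auto simp: ccone_eq_convex_cone_hull)
next
  assume C: "?hollow C"
  define P where "P = {p :: 'a \<times> 'a. fst p \<noteq> snd p}"
  have "(\<Sum>p\<in>P. (C$fst p$snd p / 2) *\<^sub>R Emat (fst p) (snd p)) $ a $ b = C$a$b" for a b
  proof -
    have "(\<Sum>p\<in>P. (C$fst p$snd p / 2) *\<^sub>R Emat (fst p) (snd p)) $ a $ b =
        (\<Sum>p\<in>P. (if p = (a,b) then C$a$b / 2 else 0) + (if p = (b,a) then C$b$a / 2 else 0))"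
      unfolding sum_component vector_scaleR_component real_scaleR_def
    proof (rule sum.cong[OF refl])
      fix p :: "'a \<times> 'a"
      obtain x y where p: "p = (x, y)" by (cases p)
      show "(C$fst p$snd p / 2) * Emat (fst p) (snd p) $ a $ b =
          (if p = (a,b) then C$a$b / 2 else 0) + (if p = (b,a) then C$b$a / 2 else 0)"
        unfolding p Emat_nth by (cases "a = x"; cases "b = y"; cases "a = y"; cases "b = x") simp_all
    qed
    also have "\<dots> = (if a \<noteq> b then C$a$b / 2 + C$b$a / 2 else 0)"
      by (simp add: sum.distrib P_def)
    also have "\<dots> = C$a$b"
      using C unfolding Sym_iff by (metis field_sum_of_halves)
    finally show ?thesis .
  qed
  then have "C = (\<Sum>p\<in>P. (C$fst p$snd p / 2) *\<^sub>R Emat (fst p) (snd p))"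
    by (simp add: vec_eq_iff)
  also have "\<dots> \<in> convex_cone hull ?E"
    using C by (intro convex_cone_sum[OF convex_cone_convex_cone_hull] convex_cone_hull_mul hull_inc)
      (auto simp: P_def)
  finally show "C \<in> ccone ?E"
    by (simp add: ccone_eq_convex_cone_hull)
qed

lemma qf_nonneg_if_entries_nonneg:
  assumes "\<forall>i j. 0 \<le> C$i$j" "\<forall>i. 0 \<le> x$i"
  shows "0 \<le> qf C x"
  unfolding qf_as_sum using assms by (intro sum_nonneg) simp

lemma ccone_Emat_qf_pos:
  assumes "C \<in> ccone Emats" "C \<noteq> 0"
  shows "\<exists>v\<in>ZposNZ. 0 < qf C v"
proof -
  obtain i j where ij: "C$i$j \<noteq> 0"
    using assms(2) by (metis vec_eq_iff zero_index)
  have C: "C \<in> Sym" "\<forall>i. C$i$i = 0" "\<forall>i j. 0 \<le> C$i$j"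
    using assms(1) by (auto simp: ccone_Emat_iff)
  then have "i \<noteq> j" "0 < C$i$j" using ij by (auto simp: order_le_less)
  then have "0 < qf C (axis i 1 + axis j 1)"
    using C by (simp add: qf_axis_add_axis)
  then show ?thesis using axis_in_ZposNZ(2) by blast
qed


section \<open>Copositivity of the Ryshkov polyhedron\<close>

lemma floor_scaled_tendsto: "((\<lambda>m. of_int \<lfloor>real m * a\<rfloor> / real m) \<longlongrightarrow> a) sequentially"
proof (rule tendsto_sandwich[of "\<lambda>m. a - 1 / real m" _ _ "\<lambda>_. a"])
  show "\<forall>\<^sub>F m in sequentially. a - 1 / real m \<le> of_int \<lfloor>real m * a\<rfloor> / real m"
  proof (rule eventually_mono[OF eventually_gt_at_top[of 0]])
    fix m :: nat assume "0 < m"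
    then have "a - 1 / real m = (real m * a - 1) / real m" by (simp add: field_simps)
    also have "\<dots> \<le> of_int \<lfloor>real m * a\<rfloor> / real m"
      by (rule divide_right_mono) linarith+
    finally show "a - 1 / real m \<le> of_int \<lfloor>real m * a\<rfloor> / real m" .
  qed
  show "\<forall>\<^sub>F m in sequentially. of_int \<lfloor>real m * a\<rfloor> / real m \<le> a"
    using eventually_gt_at_top[of 0]
    by eventually_elim (simp add: field_simps)
  show "((\<lambda>m. a - 1 / real m) \<longlongrightarrow> a) sequentially"
    using tendsto_diff[OF tendsto_const lim_const_over_n[of 1]] by simp
qed simp

text \<open>A point x of the orthant is the limit of the lattice points \<lfloor>m x\<rfloor> scaled by 1/m.\<close>

lemma COP_iff_nonneg_on_ZposNZ:
  fixes A :: "real^'n::finite^'n"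
  shows "A \<in> COP \<longleftrightarrow> A \<in> Sym \<and> (\<forall>v\<in>ZposNZ. 0 \<le> qf A v)"
proof
  assume "A \<in> Sym \<and> (\<forall>v\<in>ZposNZ. 0 \<le> qf A v)"
  then have sym: "A \<in> Sym" and nonneg: "\<forall>v\<in>ZposNZ. 0 \<le> qf A v" by auto
  have "0 \<le> qf A x" if x: "\<forall>i. 0 \<le> x$i" for x :: "real^'n"
  proof (rule ccontr)
    assume "\<not> 0 \<le> qf A x"
    define v :: "nat \<Rightarrow> real^'n" where "v m = (\<chi> i. of_int \<lfloor>real m * x$i\<rfloor>)" for m
    have "(1 / real m) *\<^sub>R v m = (\<chi> i. of_int \<lfloor>real m * x$i\<rfloor> / real m)" for m
      by (simp add: v_def vec_eq_iff)
    then have "((\<lambda>m. (1 / real m) *\<^sub>R v m) \<longlongrightarrow> x) sequentially"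
      using tendsto_vec_lambda[OF floor_scaled_tendsto, of "\<lambda>i. x$i"] by simp
    then have "((\<lambda>m. qf A ((1 / real m) *\<^sub>R v m)) \<longlongrightarrow> qf A x) sequentially"
      by (rule continuous_on_tendsto_compose[OF continuous_on_qf[where S = UNIV]]) auto
    then have "\<forall>\<^sub>F m in sequentially. qf A ((1 / real m) *\<^sub>R v m) < 0"
      using \<open>\<not> 0 \<le> qf A x\<close> by (intro order_tendstoD(2)) auto
    then obtain m where "qf A ((1 / real m) *\<^sub>R v m) < 0"
      by (auto dest: eventually_happens)
    then have neg: "qf A (v m) < 0"
      by (simp add: qf_scaleR_vec zero_less_mult_iff mult_less_0_iff)
    then have "v m \<in> ZposNZ"
      using x by (auto simp: ZposNZ_def v_def)
    then show False using nonneg neg by fastforce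
  qed
  then show "A \<in> COP" using sym by (simp add: COP_def)
qed (auto simp: COP_def ZposNZ_def)

lemma copositive_zero_grad:
  assumes cop: "A \<in> COP" and x: "\<forall>j. 0 \<le> x$j" and zero: "qf A x = 0" and pos: "0 < x$i"
  shows "(A *v x)$i = 0"
proof -
  have sym: "A \<in> Sym" using cop by (simp add: COP_def)
  define f where "f t = 2 * (A *v x)$i * t + A$i$i * t\<^sup>2" for t
  have f: "f t = qf A (x + t *\<^sub>R axis i 1)" for t
    using zero by (simp add: f_def qf_add_vec[OF sym] qf_scaleR_vec qf_axis inner_axis_left)
  have "(f has_real_derivative 2 * (A *v x)$i) (at 0)"
    unfolding f_def[abs_def] by (auto intro!: derivative_eq_intros)
  moreover have "f 0 \<le> f t" if "\<bar>0 - t\<bar> < x$i" for t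
  proof -
    have "\<forall>j. 0 \<le> (x + t *\<^sub>R axis i 1)$j"
      using x that by (auto simp: axis_def)
    then have "0 \<le> f t" using cop by (simp add: f COP_def)
    then show ?thesis by (simp add: f_def)
  qed
  ultimately have "2 * (A *v x)$i = 0"
    using pos by (intro DERIV_local_min) auto
  then show ?thesis by simp
qed

lemma qf_add_kernel_direction:
  assumes cop: "A \<in> COP" and x: "\<forall>j. 0 \<le> x$j" and zero: "qf A x = 0"
    and supp: "\<forall>j. x$j = 0 \<longrightarrow> d$j = 0"
  shows "qf A (t *\<^sub>R x + d) = qf A d"
proof -
  have sym: "A \<in> Sym" using cop by (simp add: COP_def)
  have "d$j * (A *v x)$j = 0" for j
    using copositive_zero_grad[OF cop x zero, of j] x[rule_format, of j] supp
    by (cases "x$j = 0") auto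
  then have "d \<bullet> (A *v x) = 0"
    unfolding inner_vec_def inner_real_def by (intro sum.neutral) simp
  then show ?thesis
    by (simp add: qf_add_vec[OF sym] qf_scaleR_vec zero matrix_vector_mult_scaleR)
qed

lemma Dirichlet_approx_vec:
  fixes x :: "real^'n::finite" and N :: nat
  assumes "0 < N"
  obtains q :: int and v :: "real^'n"
  where "0 < q" "\<forall>j. v$j \<in> \<int>" "\<forall>j. \<bar>of_int q * x$j - v$j\<bar> < 1 / real N"
proof -
  obtain h where h: "bij_betw h {..<CARD('n)} (UNIV::'n set)"
    using ex_bij_betw_nat_finite[of "UNIV::'n set"] by (auto simp: atLeast0LessThan)
  obtain q p where qp: "0 < q" "\<And>i. i < CARD('n) \<Longrightarrow> \<bar>of_int q * x $ h i - of_int (p i)\<bar> < 1 / N"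
    using Dirichlet_approx_simult[OF assms, where \<theta> = "\<lambda>i. x $ h i" and n = "CARD('n)"] by blast
  define g where "g = inv_into {..<CARD('n)} h"
  have "g j < CARD('n)" "h (g j) = j" for j
    using bij_betw_inv_into_right[OF h] bij_betwE[OF bij_betw_inv_into[OF h]] by (auto simp: g_def)
  then have "\<forall>j. \<bar>of_int q * x$j - of_int (p (g j))\<bar> < 1 / N"
    using qp(2) by metis
  then show ?thesis
    using that[of q "\<chi> j. of_int (p (g j))"] qp(1) by simp
qed

lemma Dirichlet_approx_orthant:
  fixes x :: "real^'n::finite" and N :: nat
  assumes x: "\<forall>j. 0 \<le> x$j" and i: "1 / real N < x$i" and N: "1 \<le> N"
  obtains q :: int and v :: "real^'n"
  where "0 < q" "v \<in> ZposNZ" "\<forall>j. \<bar>v$j - of_int q * x$j\<bar> \<le> 1 / real N"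
    "\<forall>j. x$j = 0 \<longrightarrow> v$j = 0"
proof -
  obtain q v where q: "0 < q" and vZ: "\<forall>j. v$j \<in> \<int>"
    and approx: "\<forall>j. \<bar>of_int q * x$j - v$j\<bar> < 1 / N"
    using Dirichlet_approx_vec[of N x] N by auto
  have "1 / real N \<le> 1" using N by simp
  then have small: "\<bar>v$j - of_int q * x$j\<bar> < 1" for j
    using approx[rule_format, of j] by (simp add: abs_minus_commute)
  have "0 \<le> v$j" for j
  proof -
    have "0 \<le> of_int q * x$j" using q x by simp
    with small[of j] have "-1 < v$j" by linarith
    with vZ[rule_format, of j] show ?thesis by (elim Ints_cases) simp
  qed
  moreover have "0 < v$i"
  proof -
    have "0 \<le> 1 / real N" by simp
    with i have "0 < x$i" by linarith
    with q have "x$i \<le> of_int q * x$i" by simp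
    with approx[rule_format, of i] i show ?thesis unfolding abs_less_iff by linarith
  qed
  ultimately have "v \<in> ZposNZ"
    unfolding ZposNZ_def using vZ by (auto simp: vec_eq_iff intro!: exI[of _ i])
  moreover have "v$j = 0" if "x$j = 0" for j
  proof -
    have "\<bar>v$j\<bar> < 1" using small[of j] that by simp
    with vZ[rule_format, of j] show ?thesis by (elim Ints_cases) simp
  qed
  ultimately show ?thesis
    using that q approx by (simp add: abs_minus_commute order_less_imp_le)
qed

lemma qf_le_if_components_le:
  fixes d :: "real^'n::finite"
  assumes "\<forall>j. \<bar>d$j\<bar> \<le> e"
  shows "qf A d \<le> onorm ((*v) A) * (real CARD('n) * e)\<^sup>2"
proof -
  have "norm d \<le> (\<Sum>j\<in>UNIV. \<bar>d$j\<bar>)" by (rule norm_le_l1_cart)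
  also have "\<dots> \<le> real CARD('n) * e" using assms sum_bounded_above[of UNIV "\<lambda>j. \<bar>d$j\<bar>" e] by simp
  finally have "(norm d)\<^sup>2 \<le> (real CARD('n) * e)\<^sup>2" by (intro power_mono) auto
  then have "onorm ((*v) A) * (norm d)\<^sup>2 \<le> onorm ((*v) A) * (real CARD('n) * e)\<^sup>2"
    by (intro mult_left_mono onorm_pos_le matrix_vector_mul_bounded_linear)
  then show ?thesis using abs_qf_le_onorm[of A d] by simp
qed

lemma RyshkovCOP_subset_COP: "RyshkovCOP \<subseteq> COP"
proof
  fix A :: "real^'n^'n"
  assume "A \<in> RyshkovCOP"
  then show "A \<in> COP"
    unfolding RyshkovCOP_def COP_iff_nonneg_on_ZposNZ by (auto intro: order_trans[OF zero_le_one])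
qed

text \<open>If A[x] = 0, the gradient of A vanishes on the support of x, so A[q x + d] = A[d] for
  every d supported there; a Dirichlet approximation of q x by a lattice vector v then gives
  A[v] < 1.\<close>

lemma RyshkovCOP_qf_pos:
  fixes x :: "real^'n::finite"
  assumes AR: "A \<in> RyshkovCOP" and x: "\<forall>j. 0 \<le> x$j" "x \<noteq> 0"
  shows "0 < qf A x"
proof (rule ccontr)
  assume "\<not> 0 < qf A x"
  have cop: "A \<in> COP" using AR RyshkovCOP_subset_COP by blast
  with \<open>\<not> 0 < qf A x\<close> x(1) have zero: "qf A x = 0" by (force simp: COP_def)
  obtain i where i: "0 < x$i" using x by (metis vec_eq_iff zero_index order_le_less)
  define K where "K = onorm ((*v) A)"
  define D where "D = real CARD('n)"
  have "0 \<le> K * D\<^sup>2" unfolding K_def by (intro mult_nonneg_nonneg onorm_pos_le matrix_vector_mul_bounded_linear) auto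
  obtain N :: nat where N: "K * D\<^sup>2 + 1 / x$i + 1 < real N"
    using reals_Archimedean2 by blast
  have "0 < 1 / x$i" using i by simp
  then have N1: "1 < real N" and NK: "K * D\<^sup>2 < real N" and "1 / x$i < real N"
    using N \<open>0 \<le> K * D\<^sup>2\<close> by linarith+
  then have "1 / real N < x$i"
    using i by (simp add: field_simps)
  moreover have "1 \<le> N" using N1 by simp
  ultimately obtain q v where "v \<in> ZposNZ" and approx: "\<forall>j. \<bar>v$j - of_int q * x$j\<bar> \<le> 1 / real N"
    and supp: "\<forall>j. x$j = 0 \<longrightarrow> v$j = 0"
    using Dirichlet_approx_orthant[OF x(1)] by blast
  define d where "d = v - of_int q *\<^sub>R x"
  have "qf A v = qf A (of_int q *\<^sub>R x + d)" by (simp add: d_def)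
  also have "\<dots> = qf A d"
    using supp by (intro qf_add_kernel_direction[OF cop x(1) zero]) (simp add: d_def)
  also have "\<dots> \<le> K * (D * (1 / real N))\<^sup>2"
    unfolding K_def D_def using approx by (intro qf_le_if_components_le) (simp add: d_def)
  also have "\<dots> = (K * D\<^sup>2 / N) * (1 / N)"
    by (simp add: power_mult_distrib power2_eq_square)
  also have "\<dots> < 1 * 1"
    using NK N1 \<open>0 \<le> K * D\<^sup>2\<close> by (intro mult_strict_mono') auto
  finally show False using AR \<open>v \<in> ZposNZ\<close> by (auto simp: RyshkovCOP_def)
qed

lemma qf_ge_norm_sq_if_pos:
  fixes A :: "real^'n::finite^'n"
  assumes pos: "\<forall>x. (\<forall>j. 0 \<le> x$j) \<and> x \<noteq> 0 \<longrightarrow> 0 < qf A x"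
  shows "\<exists>c>0. \<forall>x. (\<forall>j. 0 \<le> x$j) \<longrightarrow> c * (norm x)\<^sup>2 \<le> qf A x"
proof -
  define S where "S = {x::real^'n. \<forall>j. 0 \<le> x$j} \<inter> sphere 0 1"
  have "compact S"
    unfolding S_def
    by (intro closed_Int_compact compact_sphere closed_Collect_all closed_halfspace_component_ge_cart)
  moreover have "axis undefined 1 \<in> S"
    unfolding S_def by (simp add: axis_def[of _ 1, symmetric]) (simp add: axis_def)
  ultimately obtain x0 where x0: "x0 \<in> S" "\<forall>y\<in>S. qf A x0 \<le> qf A y"
    using continuous_attains_inf[OF _ _ continuous_on_qf] by blast
  have "0 < qf A x0" using x0(1) pos by (auto simp: S_def)
  moreover have "qf A x0 * (norm x)\<^sup>2 \<le> qf A x" if x: "\<forall>j. 0 \<le> x$j" for x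
  proof (cases "x = 0")
    case False
    then have "(1 / norm x) *\<^sub>R x \<in> S" using x by (simp add: S_def)
    then have "qf A x0 \<le> (1 / norm x)\<^sup>2 * qf A x"
      using x0(2) qf_scaleR_vec[of A "1 / norm x" x] by fastforce
    then show ?thesis using False by (simp add: field_simps)
  qed simp
  ultimately show ?thesis by blast
qed

lemma strictly_copositive_if_qf_ge_norm_sq:
  fixes A :: "real^'n::finite^'n"
  assumes sym: "A \<in> Sym" and c: "0 < c" "\<forall>x. (\<forall>j. 0 \<le> x$j) \<longrightarrow> c * (norm x)\<^sup>2 \<le> qf A x"
  shows "strictly_copositive A"
proof -
  define D where "D = (real CARD('n))\<^sup>2"
  have "0 < D" by (simp add: D_def)
  have "B \<in> COP" if B: "B \<in> ball A (c / D) \<inter> Sym" for B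
  proof -
    have "onorm ((*v) (B - A)) \<le> c"
    proof -
      have "onorm ((*v) (B - A)) \<le> D * norm (B - A)"
        unfolding D_def by (rule onorm_le_card_norm)
      also have "\<dots> \<le> c"
        using B \<open>0 < D\<close> by (simp add: dist_norm norm_minus_commute field_simps)
      finally show ?thesis .
    qed
    then have "\<bar>qf (B - A) x\<bar> \<le> c * (norm x)\<^sup>2" for x
      by (meson abs_qf_le_onorm mult_right_mono order_trans zero_le_power2)
    then have "0 \<le> qf B x" if "\<forall>j. 0 \<le> x$j" for x
      using c(2) that qf_diff[of B A x] by (smt (verit))
    then show ?thesis using B by (simp add: COP_def)
  qed
  then show ?thesis
    unfolding strictly_copositive_def using sym c \<open>0 < D\<close> by (intro conjI exI[of _ "c / D"]) auto
qed

lemma RyshkovCOP_qf_ge_norm_sq: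
  assumes "A \<in> (RyshkovCOP :: (real^'n::finite^'n) set)"
  obtains c where "0 < c" "\<forall>x::real^'n. (\<forall>j. 0 \<le> x$j) \<longrightarrow> c * (norm x)\<^sup>2 \<le> qf A x"
  using qf_ge_norm_sq_if_pos RyshkovCOP_qf_pos[OF assms] by blast

lemma RyshkovCOP_strictly_copositive:
  assumes "A \<in> (RyshkovCOP :: (real^'n::finite^'n) set)"
  shows "strictly_copositive A"
proof -
  obtain c where "0 < c" "\<forall>x::real^'n. (\<forall>j. 0 \<le> x$j) \<longrightarrow> c * (norm x)\<^sup>2 \<le> qf A x"
    using RyshkovCOP_qf_ge_norm_sq[OF assms] by blast
  then show ?thesis
    using assms by (intro strictly_copositive_if_qf_ge_norm_sq) (auto simp: RyshkovCOP_def)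
qed


section \<open>Moving inside the Ryshkov polyhedron\<close>

text \<open>The space L(A); for A in R its defining vectors are the minimal vectors of A.\<close>

definition min_annihilator :: "real^'n::finite^'n \<Rightarrow> (real^'n^'n) set" where
  "min_annihilator A = {Q \<in> Sym. \<forall>v\<in>ZposNZ. qf A v = 1 \<longrightarrow> qf Q v = 0}"

lemma subspace_min_annihilator: "subspace (min_annihilator A)"
  unfolding subspace_def min_annihilator_def
  by (auto intro: subspace_add[OF subspace_Sym] subspace_mul[OF subspace_Sym]
      subspace_0[OF subspace_Sym] simp: qf_add qf_scaleR)

lemma RyshkovCOP_add_scaleR:
  assumes "A \<in> RyshkovCOP" "Q \<in> Sym" "\<And>v. v \<in> ZposNZ \<Longrightarrow> 1 \<le> qf A v + s * qf Q v"
  shows "A + s *\<^sub>R Q \<in> RyshkovCOP"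
  using assms by (auto simp: RyshkovCOP_def qf_add qf_scaleR
      intro: subspace_add[OF subspace_Sym] subspace_mul[OF subspace_Sym])

lemma finite_lattice_ball: "finite {v::real^'n::finite. (\<forall>i. v$i \<in> \<int>) \<and> norm v \<le> r}"
proof -
  define G where "G = (of_int :: int \<Rightarrow> real) ` {-\<lceil>r\<rceil>..\<lceil>r\<rceil>}"
  have "{v::real^'n. (\<forall>i. v$i \<in> \<int>) \<and> norm v \<le> r} \<subseteq> vec_lambda ` (UNIV \<rightarrow>\<^sub>E G)"
  proof
    fix v :: "real^'n" assume v: "v \<in> {v. (\<forall>i. v$i \<in> \<int>) \<and> norm v \<le> r}"
    have "v$i \<in> G" for i
    proof -
      obtain k where k: "v$i = of_int k" using v by (auto elim: Ints_cases)
      have "\<bar>v$i\<bar> \<le> r" using v component_le_norm_cart[of v i] by auto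
      then show ?thesis unfolding G_def using k by (intro image_eqI[of _ _ k]) (auto, linarith+)
    qed
    then have "(\<lambda>i. v$i) \<in> UNIV \<rightarrow>\<^sub>E G" by auto
    then show "v \<in> vec_lambda ` (UNIV \<rightarrow>\<^sub>E G)" by (intro image_eqI[of _ _ "\<lambda>i. v$i"]) simp_all
  qed
  then show ?thesis
    by (rule finite_subset) (simp add: G_def finite_PiE)
qed

lemma eventually_at_right_0_ge_1:
  fixes a b :: real
  assumes "1 \<le> a" "a = 1 \<Longrightarrow> b = 0"
  shows "\<forall>\<^sub>F s in at_right 0. 1 \<le> a + s * b"
proof (cases "a = 1")
  case False
  with assms(1) have "1 < a" by simp
  moreover have "((\<lambda>s. a + s * b) \<longlongrightarrow> a) (at_right 0)"
    by (auto intro!: tendsto_eq_intros)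
  ultimately have "\<forall>\<^sub>F s in at_right 0. 1 < a + s * b"
    by (intro order_tendstoD(1))
  then show ?thesis by (rule eventually_mono) simp
qed (use assms(2) in simp)

lemma RyshkovCOP_move_small:
  fixes A Q :: "real^'n::finite^'n"
  assumes AR: "A \<in> RyshkovCOP" and QL: "Q \<in> min_annihilator A"
  shows "\<exists>s>0. A + s *\<^sub>R Q \<in> RyshkovCOP"
proof -
  obtain c where c: "0 < c" "\<forall>x. (\<forall>j. 0 \<le> x$j) \<longrightarrow> c * (norm x)\<^sup>2 \<le> qf A x"
    using RyshkovCOP_qf_ge_norm_sq[OF AR] by blast
  define K where "K = onorm ((*v) Q)"
  define F :: "(real^'n) set" where "F = {v \<in> ZposNZ. c * (norm v)\<^sup>2 < 2}"
  have "finite F"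
  proof (rule finite_subset[OF _ finite_lattice_ball[of "sqrt (2 / c)"]])
    show "F \<subseteq> {v. (\<forall>i. v$i \<in> \<int>) \<and> norm v \<le> sqrt (2 / c)}"
      using c(1) by (auto simp: F_def ZposNZ_def field_simps intro!: real_le_rsqrt)
  qed
  have "\<forall>\<^sub>F s in at_right 0. 1 \<le> qf A v + s * qf Q v" if "v \<in> F" for v
    using that AR QL by (intro eventually_at_right_0_ge_1) (auto simp: F_def RyshkovCOP_def min_annihilator_def)
  then have near: "\<forall>\<^sub>F s in at_right 0. \<forall>v\<in>F. 1 \<le> qf A v + s * qf Q v"
    using \<open>finite F\<close> by (simp add: eventually_ball_finite)
  have far: "\<forall>\<^sub>F s in at_right 0. s * K < c / 2"
    using c(1) by (intro order_tendstoD(2)) (auto intro!: tendsto_eq_intros)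
  obtain s where s: "0 < s" "\<forall>v\<in>F. 1 \<le> qf A v + s * qf Q v" "s * K < c / 2"
    using eventually_happens'[OF trivial_limit_at_right_real
        eventually_conj[OF eventually_at_right_less[of 0] eventually_conj[OF near far]]]
    by blast
  have "1 \<le> qf A v + s * qf Q v" if v: "v \<in> ZposNZ" for v
  proof (cases "v \<in> F")
    case False
    then have "2 \<le> c * (norm v)\<^sup>2" using v by (auto simp: F_def)
    moreover have "c * (norm v)\<^sup>2 \<le> qf A v" using c(2) v by (auto simp: ZposNZ_def)
    moreover have "- (s * (K * (norm v)\<^sup>2)) \<le> s * qf Q v"
      using abs_qf_le_onorm[of Q v] s(1) unfolding K_def
      by (metis abs_le_iff minus_le_iff mult_left_mono mult_minus_right order_less_imp_le)
    moreover have "s * K * (norm v)\<^sup>2 \<le> c / 2 * (norm v)\<^sup>2"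
      using s(3) by (intro mult_right_mono) auto
    ultimately show ?thesis by (simp add: mult.assoc)
  qed (use s(2) in auto)
  then show ?thesis
    using s(1) AR QL by (intro exI[of _ s] conjI RyshkovCOP_add_scaleR) (auto simp: min_annihilator_def)
qed

lemma RyshkovCOP_move_exit:
  fixes A Q :: "real^'n::finite^'n"
  assumes AR: "A \<in> RyshkovCOP" and QL: "Q \<in> min_annihilator A"
    and v0: "v0 \<in> ZposNZ" "qf Q v0 < 0"
  shows "\<exists>s>0. A + s *\<^sub>R Q \<in> RyshkovCOP \<and> Q \<notin> min_annihilator (A + s *\<^sub>R Q)"
proof -
  have QS: "Q \<in> Sym" using QL by (simp add: min_annihilator_def)
  define I where "I = {s. 0 \<le> s \<and> A + s *\<^sub>R Q \<in> RyshkovCOP}"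
  have I_le: "t \<le> (qf A v - 1) / - qf Q v" if "t \<in> I" "v \<in> ZposNZ" "qf Q v < 0" for t v
  proof -
    have "1 \<le> qf A v + t * qf Q v"
      using that by (auto simp: I_def RyshkovCOP_def qf_add qf_scaleR)
    then show ?thesis using that(3) by (simp add: field_simps)
  qed
  have bdd: "bdd_above I" using I_le[OF _ v0] by (rule bdd_aboveI)
  obtain e where "0 < e" "A + e *\<^sub>R Q \<in> RyshkovCOP"
    using RyshkovCOP_move_small[OF AR QL] by blast
  then have "e \<in> I" by (simp add: I_def)
  define s where "s = Sup I"
  have s_pos: "0 < s" using cSup_upper[OF \<open>e \<in> I\<close> bdd] \<open>0 < e\<close> by (simp add: s_def)
  have "1 \<le> qf A v + s * qf Q v" if v: "v \<in> ZposNZ" for v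
  proof (cases "0 \<le> qf Q v")
    case True then show ?thesis
      using AR v s_pos by (auto simp: RyshkovCOP_def intro: add_increasing2)
  next
    case False
    then have "s \<le> (qf A v - 1) / - qf Q v"
      unfolding s_def using \<open>e \<in> I\<close> I_le v by (intro cSup_least) auto
    then show ?thesis using False by (simp add: field_simps)
  qed
  then have sR: "A + s *\<^sub>R Q \<in> RyshkovCOP" by (rule RyshkovCOP_add_scaleR[OF AR QS])
  have "Q \<notin> min_annihilator (A + s *\<^sub>R Q)"
  proof
    assume "Q \<in> min_annihilator (A + s *\<^sub>R Q)"
    then obtain e' where "0 < e'" "A + s *\<^sub>R Q + e' *\<^sub>R Q \<in> RyshkovCOP"
      using RyshkovCOP_move_small[OF sR] by blast
    then have "s + e' \<in> I" using s_pos by (simp add: I_def scaleR_add_left add.assoc)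
    then show False using cSup_upper[OF _ bdd] \<open>0 < e'\<close> by (fastforce simp: s_def)
  qed
  then show ?thesis using s_pos sR by blast
qed

lemma min_annihilator_add_subset:
  assumes "Q \<in> min_annihilator A"
  shows "min_annihilator (A + s *\<^sub>R Q) \<subseteq> min_annihilator A"
  using assms by (auto simp: min_annihilator_def qf_add qf_scaleR)

lemma RyshkovCOP_move_reduces_dim:
  fixes A Q :: "real^'n::finite^'n"
  assumes AR: "A \<in> RyshkovCOP" and QL: "Q \<in> min_annihilator A"
    and v0: "v0 \<in> ZposNZ" "qf Q v0 < 0"
  shows "\<exists>s>0. A + s *\<^sub>R Q \<in> RyshkovCOP \<and> dim (min_annihilator (A + s *\<^sub>R Q)) < dim (min_annihilator A)"
proof -
  obtain s where s: "0 < s" "A + s *\<^sub>R Q \<in> RyshkovCOP" "Q \<notin> min_annihilator (A + s *\<^sub>R Q)"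
    using RyshkovCOP_move_exit[OF assms] by blast
  then have "min_annihilator (A + s *\<^sub>R Q) \<subset> min_annihilator A"
    using min_annihilator_add_subset[OF QL] QL by blast
  then have "dim (min_annihilator (A + s *\<^sub>R Q)) < dim (min_annihilator A)"
    by (intro dim_psubset) (simp add: span_eq_iff[THEN iffD2, OF subspace_min_annihilator])
  then show ?thesis using s by blast
qed


section \<open>Witnesses in the annihilator and perfection\<close>

lemma eq_scaleR_if_semidefinite_pencil:
  assumes QS: "Q \<in> Sym" and RS: "R \<in> Sym" and "Q \<noteq> 0"
    and Q_nonneg: "\<forall>v\<in>ZposNZ. 0 \<le> qf Q v"
    and semidef: "\<And>t. (\<forall>v\<in>ZposNZ. 0 \<le> qf (R + t *\<^sub>R Q) v) \<or> (\<forall>v\<in>ZposNZ. qf (R + t *\<^sub>R Q) v \<le> 0)"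
  shows "\<exists>\<mu>. R = \<mu> *\<^sub>R Q"
proof -
  obtain v1 where v1: "v1 \<in> ZposNZ" "0 < qf Q v1"
    using Sym_eq_0_if_qf_vanishes[OF QS] Q_nonneg \<open>Q \<noteq> 0\<close> by (force simp: order_le_less)
  define a where "a = - qf R v1 / qf Q v1"
  have up: "0 \<le> qf R v + t * qf Q v" if "a < t" "v \<in> ZposNZ" for t v
  proof -
    have "0 < qf R v1 + t * qf Q v1" using that(1) v1(2) by (simp add: a_def field_simps)
    then show ?thesis using semidef[of t] v1(1) that(2) by (force simp: qf_add qf_scaleR)
  qed
  have down: "qf R v + t * qf Q v \<le> 0" if "t < a" "v \<in> ZposNZ" for t v
  proof -
    have "qf R v1 + t * qf Q v1 < 0" using that(1) v1(2) by (simp add: a_def field_simps)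
    then show ?thesis using semidef[of t] v1(1) that(2) by (force simp: qf_add qf_scaleR)
  qed
  have "qf (R + a *\<^sub>R Q) v = 0" if v: "v \<in> ZposNZ" for v
  proof -
    have lim: "((\<lambda>t. qf R v + t * qf Q v) \<longlongrightarrow> qf R v + a * qf Q v) (at a within S)" for S
      by (intro tendsto_intros)
    have "0 \<le> qf R v + a * qf Q v"
      by (rule tendsto_lowerbound[OF lim _ trivial_limit_at_right_real])
        (auto intro!: eventually_at_rightI[of a "a + 1"] up v)
    moreover have "qf R v + a * qf Q v \<le> 0"
      by (rule tendsto_upperbound[OF lim _ trivial_limit_at_left_real])
        (auto intro!: eventually_at_leftI[of "a - 1" a] down v)
    ultimately show ?thesis by (simp add: qf_add qf_scaleR)
  qed
  then have "R + a *\<^sub>R Q = 0"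
    using RS QS by (intro Sym_eq_0_if_qf_vanishes subspace_add[OF subspace_Sym] subspace_mul[OF subspace_Sym]) auto
  then have "R = (- a) *\<^sub>R Q" by (simp add: eq_neg_iff_add_eq_0)
  then show ?thesis by blast
qed

definition row_col_form :: "real^'n^'n \<Rightarrow> 'n \<Rightarrow> real^'n^'n" where
  "row_col_form Q k = (\<chi> a b. (if a = k then Q$k$b else 0) + (if b = k then Q$a$k else 0))"

lemma row_col_form_nth:
  "row_col_form Q k $ a $ b = (if a = k then Q$k$b else 0) + (if b = k then Q$a$k else 0)"
  by (simp add: row_col_form_def)

lemma Sym_row_col_form: "Q \<in> Sym \<Longrightarrow> row_col_form Q k \<in> Sym"
  unfolding Sym_iff row_col_form_nth by auto

lemma row_col_form_mult_vec:
  "(row_col_form Q k *v v) $ a = (if a = k then (Q *v v)$k else 0) + Q$a$k * v$k"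
  by (cases "a = k") (simp_all add: row_col_form_def matrix_vector_mult_def sum.distrib distrib_right
      if_distrib[of "\<lambda>x. x * _"] cong: if_cong)

lemma qf_row_col_form:
  assumes "Q \<in> Sym"
  shows "qf (row_col_form Q k) v = 2 * v$k * (Q *v v)$k"
proof -
  have "(\<Sum>a\<in>UNIV. v$a * (Q$a$k * v$k)) = v$k * (Q *v v)$k"
    using assms by (simp add: matrix_vector_mult_def sum_distrib_left Sym_iff mult_ac)
  then show ?thesis
    unfolding qf_def inner_vec_def
    by (simp add: row_col_form_mult_vec distrib_left sum.distrib if_distrib[of "\<lambda>x. _ * x"] cong: if_cong)
qed

lemma qf_Emat:
  assumes "i \<noteq> j"
  shows "qf (Emat i j) v = 2 * v$i * v$j"
proof -
  have "(Emat i j *v v) $ a = (if a = i then v$j else 0) + (if a = j then v$i else 0)" for a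
    using assms by (cases "a = i"; cases "a = j") (simp_all add: Emat_def matrix_vector_mult_def
        distrib_right sum.distrib if_distrib[of "\<lambda>x. x * _"] cong: if_cong)
  then show ?thesis
    unfolding qf_def inner_vec_def
    using assms by (simp add: distrib_left sum.distrib if_distrib[of "\<lambda>x. _ * x"] cong: if_cong)
qed

lemma qf_single_entry:
  assumes "\<And>a b. a \<noteq> k \<or> b \<noteq> k \<Longrightarrow> Q$a$b = 0"
  shows "qf Q v = Q$k$k * (v$k)\<^sup>2"
proof -
  have "(Q *v v) $ a = (\<Sum>j\<in>UNIV. if j = k then (if a = k then Q$k$k * v$k else 0) else 0)" for a
    unfolding matrix_vector_mult_def vec_lambda_beta using assms by (intro sum.cong refl) auto
  then have "(Q *v v) $ a = (if a = k then Q$k$k * v$k else 0)" for a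
    by simp
  then show ?thesis
    unfolding qf_def inner_vec_def by (simp add: if_distrib[of "\<lambda>x. _ * x"] power2_eq_square cong: if_cong)
qed

lemma row_col_form_in_min_annihilator:
  assumes QL: "Q \<in> min_annihilator A" and Q_nonneg: "\<forall>v\<in>ZposNZ. 0 \<le> qf Q v"
  shows "row_col_form Q k \<in> min_annihilator A"
proof -
  have QS: "Q \<in> Sym" using QL by (simp add: min_annihilator_def)
  have cop: "Q \<in> COP" using QS Q_nonneg by (simp add: COP_iff_nonneg_on_ZposNZ)
  have "v$k * (Q *v v)$k = 0" if "v \<in> ZposNZ" "qf A v = 1" for v
  proof -
    have v: "\<forall>j. 0 \<le> v$j" and "qf Q v = 0"
      using that QL by (auto simp: ZposNZ_def min_annihilator_def)
    then show ?thesis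
      using copositive_zero_grad[OF cop v, of k] v by (cases "v$k = 0") (auto simp: order_le_less)
  qed
  then show ?thesis
    using QS by (simp add: min_annihilator_def Sym_row_col_form qf_row_col_form)
qed

lemma single_entry_if_row_col_forms_parallel:
  assumes QS: "Q \<in> Sym" and k: "Q$k$k \<noteq> 0" and par: "\<And>l. \<exists>\<mu>. row_col_form Q l = \<mu> *\<^sub>R Q"
    and ab: "a \<noteq> k \<or> b \<noteq> k"
  shows "Q$a$b = 0"
proof -
  obtain \<mu> where \<mu>: "row_col_form Q k = \<mu> *\<^sub>R Q" using par by blast
  have "2 * Q$k$k = \<mu> * Q$k$k"
    using arg_cong[OF \<mu>, of "\<lambda>M. M$k$k"] by (simp add: row_col_form_nth)
  then have "\<mu> = 2" using k by simp
  then have off: "Q$a$b = 0" if "a \<noteq> k" "b \<noteq> k" for a b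
    using arg_cong[OF \<mu>, of "\<lambda>M. M$a$b"] that by (simp add: row_col_form_nth)
  have row: "Q$l$k = 0" if "l \<noteq> k" for l
  proof -
    obtain \<nu> where \<nu>: "row_col_form Q l = \<nu> *\<^sub>R Q" using par by blast
    have "\<nu> * Q$k$k = 0"
      using arg_cong[OF \<nu>, of "\<lambda>M. M$k$k"] that by (simp add: row_col_form_nth)
    then have "\<nu> = 0" using k by simp
    then show ?thesis using arg_cong[OF \<nu>, of "\<lambda>M. M$l$k"] that by (simp add: row_col_form_nth)
  qed
  show ?thesis
  proof (cases "a = k")
    case True
    then show ?thesis using ab row[of b] QS[unfolded Sym_iff, rule_format, of k b] by simp
  next
    case False
    then show ?thesis using off row[of a] by (cases "b = k") simp_all
  qed
qed

lemma exists_diag_pos_if_notin_ccone_Emat: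
  assumes QS: "Q \<in> Sym" and Q_nonneg: "\<forall>v\<in>ZposNZ. 0 \<le> qf Q v" and "Q \<notin> ccone Emats"
  shows "\<exists>k. 0 < Q$k$k"
proof (rule ccontr)
  assume "\<not> ?thesis"
  moreover have "0 \<le> Q$i$i" for i
    using Q_nonneg axis_in_ZposNZ(1)[of i] qf_axis[of Q i] by auto
  ultimately have diag: "\<forall>i. Q$i$i = 0" by (simp add: not_less order_antisym)
  have "0 \<le> Q$i$j" for i j
    using Q_nonneg axis_in_ZposNZ(2)[of i j] qf_axis_add_axis[OF QS, of i j] diag
    by (cases "i = j") auto
  then have "Q \<in> ccone Emats" using QS diag by (simp add: ccone_Emat_iff)
  with \<open>Q \<notin> ccone Emats\<close> show False by blast
qed

lemma Emat_in_min_annihilator_if_single_entry: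
  assumes QL: "Q \<in> min_annihilator A" and k: "0 < Q$k$k"
    and Q_entries: "\<And>a b. a \<noteq> k \<or> b \<noteq> k \<Longrightarrow> Q$a$b = 0" and "l \<noteq> k"
  shows "Emat k l \<in> min_annihilator A"
proof -
  have "qf (Emat k l) v = 0" if "v \<in> ZposNZ" "qf A v = 1" for v
  proof -
    have "Q$k$k * (v$k)\<^sup>2 = 0"
      using that QL qf_single_entry[OF Q_entries, where v = v] by (simp add: min_annihilator_def)
    then have "v$k = 0" using k by simp
    then show ?thesis using \<open>l \<noteq> k\<close> by (simp add: qf_Emat)
  qed
  then show ?thesis by (simp add: min_annihilator_def Sym_Emat)
qed

lemma exists_other_if_card_ge_2:
  fixes k :: "'n::finite"
  assumes "CARD('n) \<ge> 2"
  obtains l where "l \<noteq> k"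
proof (rule ccontr)
  assume "\<not> thesis"
  then have "UNIV = {k}" using that by blast
  then have "CARD('n) = card {k}" by (rule arg_cong)
  then show False using assms by simp
qed

text \<open>Otherwise the annihilator would be a line spanned by a form Q that is nonnegative on the
  lattice and outside the cone; then Q = Q_kk e_k e_k^T and E_kl would be a nonzero element of
  the annihilator inside the cone.\<close>

lemma min_annihilator_witness:
  assumes n: "CARD('n::finite) \<ge> 2" and L: "min_annihilator A \<noteq> {0::real^'n^'n}"
  shows "\<exists>Q\<in>min_annihilator A. Q \<noteq> 0 \<and>
    (Q \<in> ccone Emats \<or> (\<exists>v\<in>ZposNZ. qf Q v < 0) \<and> (\<exists>v\<in>ZposNZ. 0 < qf Q v))"
proof (rule ccontr)
  assume "\<not> ?thesis"
  then have H: "Q \<notin> ccone Emats \<and> ((\<forall>v\<in>ZposNZ. 0 \<le> qf Q v) \<or> (\<forall>v\<in>ZposNZ. qf Q v \<le> 0))"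
    if "Q \<in> min_annihilator A" "Q \<noteq> 0" for Q
    using that by (auto simp: not_less)
  note subspace = subspace_min_annihilator[of A]
  obtain Q0 where Q0: "Q0 \<in> min_annihilator A" "Q0 \<noteq> 0"
    using L subspace_0[OF subspace] by blast
  obtain Q where QL: "Q \<in> min_annihilator A" and "Q \<noteq> 0" and Q_nonneg: "\<forall>v\<in>ZposNZ. 0 \<le> qf Q v"
  proof (cases "\<forall>v\<in>ZposNZ. 0 \<le> qf Q0 v")
    case False
    then have "\<forall>v\<in>ZposNZ. 0 \<le> qf (- Q0) v" using H[OF Q0] by (auto simp: qf_uminus)
    then show ?thesis using that[of "- Q0"] Q0 subspace_neg[OF subspace] by auto
  qed (use that Q0 in blast)
  have QS: "Q \<in> Sym" using QL by (simp add: min_annihilator_def)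
  have parallel: "\<exists>\<mu>. R = \<mu> *\<^sub>R Q" if RL: "R \<in> min_annihilator A" for R
  proof (rule eq_scaleR_if_semidefinite_pencil[OF QS _ \<open>Q \<noteq> 0\<close> Q_nonneg])
    show "R \<in> Sym" using RL by (simp add: min_annihilator_def)
    fix t
    have "R + t *\<^sub>R Q \<in> min_annihilator A"
      using RL QL by (intro subspace_add[OF subspace] subspace_mul[OF subspace])
    then show "(\<forall>v\<in>ZposNZ. 0 \<le> qf (R + t *\<^sub>R Q) v) \<or> (\<forall>v\<in>ZposNZ. qf (R + t *\<^sub>R Q) v \<le> 0)"
      using H by (cases "R + t *\<^sub>R Q = 0") auto
  qed
  obtain k where k: "0 < Q$k$k"
    using exists_diag_pos_if_notin_ccone_Emat[OF QS Q_nonneg] H[OF QL \<open>Q \<noteq> 0\<close>] by blast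
  have Q_entries: "Q$a$b = 0" if "a \<noteq> k \<or> b \<noteq> k" for a b
    by (rule single_entry_if_row_col_forms_parallel[OF QS _
          parallel[OF row_col_form_in_min_annihilator[OF QL Q_nonneg]] that]) (use k in simp)
  obtain l :: 'n where "l \<noteq> k" using exists_other_if_card_ge_2[OF n] by blast
  then have "Emat k l \<in> min_annihilator A"
    using Emat_in_min_annihilator_if_single_entry[OF QL k Q_entries] by blast
  moreover have "Emat k l \<in> ccone Emats"
    unfolding ccone_eq_convex_cone_hull by (rule hull_inc) (use \<open>l \<noteq> k\<close> in blast)
  moreover have "Emat k l $ k $ l = 1"
    using \<open>l \<noteq> k\<close> by (simp add: Emat_nth)
  then have "Emat k l \<noteq> 0" by auto
  ultimately show False using H by blast
qed

lemma perfect_if_min_annihilator_trivial: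
  assumes AR: "A \<in> RyshkovCOP" and L: "min_annihilator A = {0}"
  shows "perfect_copositive A" "minCOP A = 1"
proof -
  have AS: "A \<in> Sym" and ge1: "\<forall>v\<in>ZposNZ. 1 \<le> qf A v"
    using AR by (auto simp: RyshkovCOP_def)
  obtain v1 where v1: "v1 \<in> ZposNZ" "qf A v1 = 1"
  proof (rule ccontr)
    assume "\<not> thesis"
    then have "A \<in> min_annihilator A" using that AS by (auto simp: min_annihilator_def)
    then have "A = 0" using L by blast
    then show False using ge1 axis_in_ZposNZ(1) by fastforce
  qed
  show min1: "minCOP A = 1"
    unfolding minCOP_def by (rule cInf_eq_minimum) (use v1 ge1 in auto)
  have MinCOP: "MinCOP A = {v \<in> ZposNZ. qf A v = 1}"
    by (auto simp: MinCOP_def ZposNZ_def min1)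
  have "(\<forall>v\<in>MinCOP A. qf Q v = minCOP A) \<longleftrightarrow> Q = A" if QS: "Q \<in> Sym" for Q
  proof
    assume "\<forall>v\<in>MinCOP A. qf Q v = minCOP A"
    then have "Q - A \<in> min_annihilator A"
      using QS AS by (auto simp: min_annihilator_def MinCOP min1 qf_diff intro: subspace_diff[OF subspace_Sym])
    then show "Q = A" using L by auto
  qed (simp add: MinCOP_def)
  then show "perfect_copositive A"
    unfolding perfect_copositive_def using RyshkovCOP_strictly_copositive[OF AR] by blast
qed


section \<open>The decomposition of the Ryshkov polyhedron\<close>

abbreviation perfect_min1 :: "(real^'n::finite^'n) set" where
  "perfect_min1 \<equiv> {P. perfect_copositive P \<and> minCOP P = 1}"

definition perfect_cone_sum :: "(real^'n::finite^'n) set" where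
  "perfect_cone_sum = {A + C | A C. A \<in> convex hull perfect_min1 \<and> C \<in> ccone Emats}"

lemma convex_RyshkovCOP: "convex RyshkovCOP"
  unfolding convex_def RyshkovCOP_def
proof (intro allI impI ballI CollectI conjI)
  fix A B :: "real^'n^'n" and u v :: real and w :: "real^'n"
  assume A: "A \<in> {B \<in> Sym. \<forall>v\<in>ZposNZ. 1 \<le> qf B v}" and B: "B \<in> {B \<in> Sym. \<forall>v\<in>ZposNZ. 1 \<le> qf B v}"
    and uv: "0 \<le> u" "0 \<le> v" "u + v = 1"
  show "u *\<^sub>R A + v *\<^sub>R B \<in> Sym"
    using A B by (auto intro: subspace_add[OF subspace_Sym] subspace_mul[OF subspace_Sym])
  assume "w \<in> ZposNZ"
  then have "u * 1 + v * 1 \<le> u * qf A w + v * qf B w"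
    using A B uv by (intro add_mono mult_left_mono) auto
  then show "1 \<le> qf (u *\<^sub>R A + v *\<^sub>R B) w" using uv by (simp add: qf_add qf_scaleR)
qed

lemma perfect_min1_in_RyshkovCOP:
  assumes "perfect_copositive P" "minCOP P = 1"
  shows "P \<in> RyshkovCOP"
proof -
  have "P \<in> COP" "P \<in> Sym"
    using assms(1) by (auto simp: perfect_copositive_def strictly_copositive_def)
  then have bdd: "bdd_below {qf P v | v. v \<in> ZposNZ}"
    unfolding COP_def ZposNZ_def by (auto intro!: bdd_belowI[of _ 0])
  have "1 \<le> qf P v" if "v \<in> ZposNZ" for v
  proof -
    have "minCOP P \<le> qf P v"
      unfolding minCOP_def by (rule cInf_lower[OF _ bdd]) (use that in blast)
    then show ?thesis using assms(2) by simp
  qed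
  then show ?thesis using \<open>P \<in> Sym\<close> by (simp add: RyshkovCOP_def)
qed

lemma perfect_cone_sum_subset_RyshkovCOP: "perfect_cone_sum \<subseteq> RyshkovCOP"
proof
  fix B assume "B \<in> perfect_cone_sum"
  then obtain A C where B: "B = A + C" "A \<in> convex hull perfect_min1" "C \<in> ccone Emats"
    unfolding perfect_cone_sum_def by blast
  have "convex hull perfect_min1 \<subseteq> RyshkovCOP"
    by (rule hull_minimal) (auto intro: perfect_min1_in_RyshkovCOP convex_RyshkovCOP)
  then have A: "A \<in> Sym" "\<forall>v\<in>ZposNZ. 1 \<le> qf A v"
    using B(2) by (auto simp: RyshkovCOP_def)
  have C: "C \<in> Sym" "\<forall>i j. 0 \<le> C$i$j"
    using B(3) by (auto simp: ccone_Emat_iff)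
  have "1 \<le> qf A v + qf C v" if "v \<in> ZposNZ" for v
    using A(2) that qf_nonneg_if_entries_nonneg[OF C(2), of v] by (force simp: ZposNZ_def)
  then show "B \<in> RyshkovCOP"
    unfolding B(1) RyshkovCOP_def using A(1) C(1) by (simp add: qf_add subspace_add[OF subspace_Sym])
qed

lemma convex_perfect_cone_sum: "convex perfect_cone_sum"
proof -
  have eq: "perfect_cone_sum = (\<Union>A\<in>convex hull perfect_min1. \<Union>C\<in>convex_cone hull Emats. {A + C})"
    unfolding perfect_cone_sum_def ccone_eq_convex_cone_hull by blast
  show ?thesis
    unfolding eq by (intro convex_sums convex_convex_hull convex_convex_cone_hull)
qed

lemma perfect_cone_sum_add_ccone:
  assumes "B \<in> perfect_cone_sum" "C \<in> ccone Emats"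
  shows "B + C \<in> perfect_cone_sum"
proof -
  obtain A C' where "B = A + C'" "A \<in> convex hull perfect_min1" "C' \<in> ccone Emats"
    using assms(1) unfolding perfect_cone_sum_def by blast
  moreover have "C' + C \<in> ccone Emats" using ccone_add calculation(3) assms(2) by blast
  ultimately show ?thesis unfolding perfect_cone_sum_def by (auto simp: add.assoc)
qed

lemma perfect_min1_in_perfect_cone_sum:
  assumes "perfect_copositive P" "minCOP P = 1"
  shows "P \<in> perfect_cone_sum"
proof -
  have "P \<in> convex hull perfect_min1" using assms by (intro hull_inc) simp
  moreover have "0 \<in> ccone Emats"
    by (simp add: ccone_eq_convex_cone_hull convex_cone_hull_contains_0)
  ultimately show ?thesis
    unfolding perfect_cone_sum_def by force
qed

lemma convex_mem_if_both_directions: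
  fixes S :: "'a::real_vector set"
  assumes "convex S" "x + s *\<^sub>R d \<in> S" "x - t *\<^sub>R d \<in> S" "0 < s" "0 < t"
  shows "x \<in> S"
proof -
  define u where "u = t / (s + t)"
  define w where "w = s / (s + t)"
  have "0 < s + t" using assms by simp
  then have uw: "0 \<le> u" "0 \<le> w" "u + w = 1"
    using assms by (simp_all add: u_def w_def add_divide_distrib[symmetric] add.commute)
  have "u *\<^sub>R (x + s *\<^sub>R d) + w *\<^sub>R (x - t *\<^sub>R d) = (u + w) *\<^sub>R x + (u * s - w * t) *\<^sub>R d"
    by (simp add: algebra_simps)
  also have "\<dots> = x"
    using uw by (simp add: u_def w_def)
  finally show ?thesis
    using convexD[OF assms(1-3) uw] by simp
qed

lemma RyshkovCOP_subset_perfect_cone_sum: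
  assumes n: "CARD('n::finite) \<ge> 2"
  shows "(RyshkovCOP :: (real^'n^'n) set) \<subseteq> perfect_cone_sum"
proof
  fix A :: "real^'n^'n"
  assume "A \<in> RyshkovCOP"
  then show "A \<in> perfect_cone_sum"
  proof (induction "dim (min_annihilator A)" arbitrary: A rule: less_induct)
    case less
    note AR = less.prems
    show ?case
    proof (cases "min_annihilator A = {0}")
      case True
      then show ?thesis
        using perfect_if_min_annihilator_trivial[OF AR] perfect_min1_in_perfect_cone_sum by blast
    next
      case False
      then obtain Q where QL: "Q \<in> min_annihilator A" and "Q \<noteq> 0"
        and witness: "Q \<in> ccone Emats \<or> (\<exists>v\<in>ZposNZ. qf Q v < 0) \<and> (\<exists>v\<in>ZposNZ. 0 < qf Q v)"
        using min_annihilator_witness[OF n] by blast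
      have mQL: "- Q \<in> min_annihilator A"
        using QL subspace_neg[OF subspace_min_annihilator] by blast
      have step: "\<exists>s>0. A + s *\<^sub>R R \<in> perfect_cone_sum"
        if R: "R \<in> min_annihilator A" "v \<in> ZposNZ" "qf R v < 0" for R v
      proof -
        obtain s where "0 < s" "A + s *\<^sub>R R \<in> RyshkovCOP"
          "dim (min_annihilator (A + s *\<^sub>R R)) < dim (min_annihilator A)"
          using RyshkovCOP_move_reduces_dim[OF AR R] by blast
        then show ?thesis using less.hyps by blast
      qed
      from witness show ?thesis
      proof
        assume QC: "Q \<in> ccone Emats"
        obtain v where "v \<in> ZposNZ" "qf (- Q) v < 0"
          using ccone_Emat_qf_pos[OF QC \<open>Q \<noteq> 0\<close>] by (auto simp: qf_uminus)
        then obtain s where s: "0 < s" "A + s *\<^sub>R (- Q) \<in> perfect_cone_sum"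
          using step[OF mQL] by blast
        have "s *\<^sub>R Q \<in> ccone Emats" using QC s(1) by (intro ccone_scaleR) auto
        then have "(A + s *\<^sub>R (- Q)) + s *\<^sub>R Q \<in> perfect_cone_sum"
          by (rule perfect_cone_sum_add_ccone[OF s(2)])
        then show ?thesis by simp
      next
        assume "(\<exists>v\<in>ZposNZ. qf Q v < 0) \<and> (\<exists>v\<in>ZposNZ. 0 < qf Q v)"
        then obtain v0 v1 where "v0 \<in> ZposNZ" "qf Q v0 < 0" "v1 \<in> ZposNZ" "qf (- Q) v1 < 0"
          by (auto simp: qf_uminus)
        then obtain s t where "0 < s" "A + s *\<^sub>R Q \<in> perfect_cone_sum"
          and "0 < t" "A + t *\<^sub>R (- Q) \<in> perfect_cone_sum"
          using step[OF QL] step[OF mQL] by blast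
        then show ?thesis
          by (intro convex_mem_if_both_directions[OF convex_perfect_cone_sum, of A s Q t]) auto
      qed
    qed
  qed
qed

theorem theorem7p1:
  assumes "CARD('n::finite) \<ge> 2"
  shows "(RyshkovCOP :: (real^'n^'n) set) =
    {A + C | A C. A \<in> convex hull {P. perfect_copositive P \<and> minCOP P = 1}
                 \<and> C \<in> ccone {Emat i j | i j. i \<noteq> j}}"
  using RyshkovCOP_subset_perfect_cone_sum[OF assms] perfect_cone_sum_subset_RyshkovCOP
  unfolding perfect_cone_sum_def by (rule antisym)

end
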